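(* Let $f=\frac1n\sum_{i=1}^n f_i$ be $L$-smooth and let the iterates be generated by Algorithm EControl (described in the context) with stepsize $\gamma$, parameter $\eta$ and compressor $\mathcal{C}_\delta$. With $E_t=\frac1n\sum_{i}\mathbb{E}\|e_t^i\|^2$ and $H_t=\frac1n\sum_i\mathbb{E}\|\eta e_t^i+g_t^i-h_t^i\|^2$, for every $t\ge0$, $$\mathbb{E}\|x_{t+1}-x_t\|^2\le\gamma^2\left(2(1-\delta)H_t+4\eta^2E_t+4\mathbb{E}\|\nabla f(x_t)\|^2+\frac{2\sigma^2}{n}\right).$$
   Context: $\mathcal{C}_\delta$ ($0<\delta\le1$) is a possibly randomized map with $\mathbb{E}\|\mathcal{C}_\delta(x)-x\|^2\le(1-\delta)\|x\|^2$ for all $x$, independent randomness at each call. Stochastic gradient oracles $g^i(x)$ of $f_i$ satisfy $\mathbb{E}[g^i(x)]=\nabla f_i(x)$, $\mathbb{E}\|g^i(x)-\nabla f_i(x)\|^2\le\sigma^2$, fresh independent randomness per call. Algorithm EControl: input $x_0$, $\gamma>0$, $\eta>0$, $e_0^i=0$, $h_0^i=g^i(x_0)$, $h_0=\frac1n\sum_i h_0^i$. For $t=0,1,\dots$: $g_t^i=g^i(x_t)$, $\Delta_t^i=\mathcal{C}_\delta(\eta e_t^i+g_t^i-h_t^i)$, $e_{t+1}^i=e_t^i+g_t^i-h_t^i-\Delta_t^i$, $h_{t+1}^i=h_t^i+\Delta_t^i$; $x_{t+1}=x_t-\gamma h_t-\frac\gamma n\sum_i\Delta_t^i$, $h_{t+1}=h_t+\frac1n\sum_i\Delta_t^i$.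 *)

theory Defs
  imports "HOL-Probability.Probability"
begin

text \<open>Each call of a stochastic oracle / of the compressor consumes a fresh random seed.
  Oracle t i: the seed used by worker i for its oracle call at step t
  (Oracle 0 i is the call producing h_0^i = g^i(x_0), Oracle (Suc t) i the call g_t^i = g^i(x_t));
  Comp t i: the seed used by worker i in the compressor call at step t.\<close>
datatype call = Oracle nat nat | Comp nat nat

text \<open>State of EControl at time t: (x_t, e_t^., h_t^., h_t).  Workers are 0..n-1.
  g i x s : stochastic gradient oracle of worker i at point x with seed s;
  C v s : compressor applied to v with seed s.\<close>
fun econtrol ::
  "(nat \<Rightarrow> 'v::real_normed_vector \<Rightarrow> 's \<Rightarrow> 'v) \<Rightarrow> ('v \<Rightarrow> 's \<Rightarrow> 'v) \<Rightarrow> nat \<Rightarrow> real \<Rightarrow> real \<Rightarrow> 'v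
    \<Rightarrow> (call \<Rightarrow> 's) \<Rightarrow> nat \<Rightarrow> 'v \<times> (nat \<Rightarrow> 'v) \<times> (nat \<Rightarrow> 'v) \<times> 'v" where
  "econtrol g C n \<gamma> \<eta> x0 w 0 =
     (x0, (\<lambda>i. 0), (\<lambda>i. g i x0 (w (Oracle 0 i))),
      (1 / real n) *\<^sub>R (\<Sum>i<n. g i x0 (w (Oracle 0 i))))"
| "econtrol g C n \<gamma> \<eta> x0 w (Suc t) =
     (let (x, e, h, hb) = econtrol g C n \<gamma> \<eta> x0 w t;
          gt = (\<lambda>i. g i x (w (Oracle (Suc t) i)));
          \<Delta> = (\<lambda>i. C (\<eta> *\<^sub>R e i + gt i - h i) (w (Comp t i)))
      in (x - \<gamma> *\<^sub>R hb - (\<gamma> / real n) *\<^sub>R (\<Sum>i<n. \<Delta> i),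
          (\<lambda>i. e i + gt i - h i - \<Delta> i),
          (\<lambda>i. h i + \<Delta> i),
          hb + (1 / real n) *\<^sub>R (\<Sum>i<n. \<Delta> i)))"

definition ec_x where "ec_x g C n \<gamma> \<eta> x0 w t = fst (econtrol g C n \<gamma> \<eta> x0 w t)"
definition ec_e where "ec_e g C n \<gamma> \<eta> x0 w t i = fst (snd (econtrol g C n \<gamma> \<eta> x0 w t)) i"
definition ec_h where "ec_h g C n \<gamma> \<eta> x0 w t i = fst (snd (snd (econtrol g C n \<gamma> \<eta> x0 w t))) i"
definition ec_g where "ec_g g C n \<gamma> \<eta> x0 w t i = g i (ec_x g C n \<gamma> \<eta> x0 w t) (w (Oracle (Suc t) i))"

end

theory Submission
  imports Defs
begin

(* Write V_t^i = eta e_t^i + g_t^i - h_t^i for the compressor input.  Since h_t^i + Delta_t^i =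
  (Delta_t^i - V_t^i) + (eta e_t^i + g_t^i), the step x_{t+1} - x_t is -gamma times the mean compression
  error plus the mean of eta e_t^i + g_t^i, and |a + b|^2 <= 2|a|^2 + 2|b|^2 splits the bound in two.
  Conditionally on all seeds except those of the compressor calls at step t, V_t^i is frozen, so the
  contraction property gives E|Delta_t^i - V_t^i|^2 <= (1 - delta) E|V_t^i|^2.  Conditionally on all seeds
  except those of the oracle calls producing the g_t^i, these are independent unbiased perturbations of
  the grad f_i(x_t) with variance sigma^2, so replacing them by the true gradients costs sigma^2/n; what
  remains is |eta mean(e_t) + grad f(x_t)|^2 <= 2 eta^2 mean|e_t^i|^2 + 2|grad f(x_t)|^2.  Conditioning is
  realised by transporting expectations to the product of the seed laws (independence) and integrating
  out the relevant coordinates first (Fubini). *)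

lemma norm_add_squared_le:
  fixes u v :: "'a::real_normed_vector"
  shows "(norm (u + v))\<^sup>2 \<le> 2 * (norm u)\<^sup>2 + 2 * (norm v)\<^sup>2"
proof -
  have "(norm (u + v))\<^sup>2 \<le> (norm u + norm v)\<^sup>2"
    by (rule power_mono[OF norm_triangle_ineq]) simp
  also have "\<dots> = 2 * (norm u)\<^sup>2 + 2 * (norm v)\<^sup>2 - (norm u - norm v)\<^sup>2"
    by (simp add: power2_sum power2_diff)
  also have "\<dots> \<le> 2 * (norm u)\<^sup>2 + 2 * (norm v)\<^sup>2"
    by simp
  finally show ?thesis .
qed

lemma norm_mean_squared_le:
  fixes a :: "'i \<Rightarrow> 'a::real_normed_vector"
  shows "(norm ((1 / real (card A)) *\<^sub>R (\<Sum>i\<in>A. a i)))\<^sup>2 \<le> (1 / real (card A)) * (\<Sum>i\<in>A. (norm (a i))\<^sup>2)"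
proof (cases "card A = 0")
  case False
  have "(norm (\<Sum>i\<in>A. a i))\<^sup>2 \<le> (\<Sum>i\<in>A. norm (a i))\<^sup>2"
    by (rule power_mono[OF norm_sum]) simp
  also have "\<dots> \<le> (\<Sum>i\<in>A. (norm (a i))\<^sup>2) * real (card A)"
    by (rule sum_squared_le_sum_of_squares)
  finally show ?thesis
    using False by (simp add: power2_eq_square field_simps)
qed simp

lemma norm_mean_add_squared_le:
  fixes e d :: "'i \<Rightarrow> 'a::real_normed_vector"
  shows "(norm ((1 / real (card A)) *\<^sub>R (\<Sum>i\<in>A. \<eta> *\<^sub>R e i + d i)))\<^sup>2
    \<le> 2 * \<eta>\<^sup>2 / real (card A) * (\<Sum>i\<in>A. (norm (e i))\<^sup>2) + 2 * (norm ((1 / real (card A)) *\<^sub>R (\<Sum>i\<in>A. d i)))\<^sup>2"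
proof -
  define m where "m = (1 / real (card A)) *\<^sub>R (\<Sum>i\<in>A. e i)"
  define b where "b = (1 / real (card A)) *\<^sub>R (\<Sum>i\<in>A. d i)"
  have "(1 / real (card A)) *\<^sub>R (\<Sum>i\<in>A. \<eta> *\<^sub>R e i + d i) = \<eta> *\<^sub>R m + b"
    by (simp add: m_def b_def sum.distrib scaleR_sum_right scaleR_add_right)
  moreover have "(norm (\<eta> *\<^sub>R m + b))\<^sup>2 \<le> 2 * \<eta>\<^sup>2 * (norm m)\<^sup>2 + 2 * (norm b)\<^sup>2"
    using norm_add_squared_le[of "\<eta> *\<^sub>R m" b] by (simp add: power_mult_distrib)
  moreover have "2 * \<eta>\<^sup>2 * (norm m)\<^sup>2 \<le> 2 * \<eta>\<^sup>2 * ((1 / real (card A)) * (\<Sum>i\<in>A. (norm (e i))\<^sup>2))"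
    unfolding m_def by (intro mult_left_mono norm_mean_squared_le) simp
  ultimately show ?thesis
    by (simp add: b_def)
qed

lemma GDERIV_sum:
  assumes "\<And>i. i \<in> I \<Longrightarrow> GDERIV (f i) x :> d i"
  shows "GDERIV (\<lambda>x. \<Sum>i\<in>I. f i x) x :> (\<Sum>i\<in>I. d i)"
  using assms unfolding gderiv_def by (auto intro!: has_derivative_sum simp: inner_sum_right)

lemma GDERIV_unique:
  assumes "GDERIV f x :> d" and "GDERIV f x :> d'"
  shows "d = d'"
proof -
  have "(\<lambda>h. h \<bullet> d) = (\<lambda>h. h \<bullet> d')"
    using assms unfolding gderiv_def by (rule has_derivative_unique)
  then have "(d - d') \<bullet> d = (d - d') \<bullet> d'"
    by metis
  then have "(d - d') \<bullet> (d - d') = 0"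
    by (simp add: inner_diff_right)
  then show ?thesis
    by simp
qed

lemma GDERIV_mean_unique:
  assumes f: "\<And>x. f x = (1 / real n) * (\<Sum>i<n. fi i x)"
    and "\<And>i. i < n \<Longrightarrow> GDERIV (fi i) x :> d i" and "GDERIV f x :> D"
  shows "D = (1 / real n) *\<^sub>R (\<Sum>i<n. d i)"
proof -
  have "GDERIV f x :> (1 / real n) *\<^sub>R (\<Sum>i<n. d i) + (\<Sum>i<n. fi i x) *\<^sub>R 0"
    unfolding f[abs_def] using assms(2) by (intro GDERIV_mult GDERIV_const GDERIV_sum) auto
  then show ?thesis
    using assms(3) GDERIV_unique by auto
qed

lemma (in prob_space) nn_integral_sq_norm_add_centered_le:
  fixes \<phi> :: "'a \<Rightarrow> 'b::euclidean_space"
  assumes \<phi>: "integrable M \<phi>" and centered: "(\<integral>s. \<phi> s \<partial>M) = 0"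
  shows "(\<integral>\<^sup>+s. ennreal ((norm (c + \<phi> s))\<^sup>2) \<partial>M) \<le> ennreal ((norm c)\<^sup>2) + (\<integral>\<^sup>+s. ennreal ((norm (\<phi> s))\<^sup>2) \<partial>M)"
proof (cases "(\<integral>\<^sup>+s. ennreal ((norm (\<phi> s))\<^sup>2) \<partial>M) = \<infinity>")
  case False
  then obtain r where r: "(\<integral>\<^sup>+s. ennreal ((norm (\<phi> s))\<^sup>2) \<partial>M) = ennreal r" "r \<ge> 0"
    by (cases "(\<integral>\<^sup>+s. ennreal ((norm (\<phi> s))\<^sup>2) \<partial>M)") auto
  have sq: "integrable M (\<lambda>s. (norm (\<phi> s))\<^sup>2)"
    using \<phi> by (intro integrableI_nn_integral_finite[OF _ _ r(1)]) auto
  have expand: "(norm (c + \<phi> s))\<^sup>2 = (norm c)\<^sup>2 + 2 * (c \<bullet> \<phi> s) + (norm (\<phi> s))\<^sup>2" for s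
    by (simp add: power2_norm_eq_inner inner_add_left inner_add_right inner_commute)
  have "(\<integral>\<^sup>+s. ennreal ((norm (c + \<phi> s))\<^sup>2) \<partial>M)
      = ennreal (\<integral>s. (norm c)\<^sup>2 + 2 * (c \<bullet> \<phi> s) + (norm (\<phi> s))\<^sup>2 \<partial>M)"
  proof -
    have "integrable M (\<lambda>s. (norm c)\<^sup>2 + 2 * (c \<bullet> \<phi> s) + (norm (\<phi> s))\<^sup>2)"
      using \<phi> sq by auto
    then show ?thesis
      unfolding expand by (rule nn_integral_eq_integral) (auto simp: expand[symmetric])
  qed
  also have "(\<integral>s. (norm c)\<^sup>2 + 2 * (c \<bullet> \<phi> s) + (norm (\<phi> s))\<^sup>2 \<partial>M) = (norm c)\<^sup>2 + r"
    using \<phi> sq centered nn_integral_eq_integral[OF sq] r by (simp add: prob_space)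
  finally show ?thesis
    using r by simp
qed simp

lemma nn_integral_PiM_sq_norm_add_sum_centered_le:
  fixes \<phi> :: "'i \<Rightarrow> 'a \<Rightarrow> 'b::euclidean_space"
  assumes N: "\<And>j. prob_space (N j)" and "finite J"
    and integrable: "\<And>j. j \<in> J \<Longrightarrow> integrable (N j) (\<phi> j)"
    and centered: "\<And>j. j \<in> J \<Longrightarrow> (\<integral>s. \<phi> j s \<partial>N j) = 0"
  shows "(\<integral>\<^sup>+y. ennreal ((norm (c + (\<Sum>j\<in>J. \<phi> j (y j))))\<^sup>2) \<partial>PiM J N)
    \<le> ennreal ((norm c)\<^sup>2) + (\<Sum>j\<in>J. \<integral>\<^sup>+s. ennreal ((norm (\<phi> j s))\<^sup>2) \<partial>N j)"
  using \<open>finite J\<close> integrable centered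
proof (induction J arbitrary: c rule: finite_induct)
  case empty
  interpret prob_space "PiM {} N"
    by (rule prob_space_PiM) (use N in auto)
  show ?case
    by (simp add: emeasure_space_1)
next
  case (insert j J)
  interpret product_sigma_finite N
    by (simp add: product_sigma_finite_def N prob_space_imp_sigma_finite)
  interpret PJ: prob_space "PiM J N"
    by (rule prob_space_PiM) (use N in auto)
  interpret Nj: prob_space "N j"
    by (rule N)
  have [measurable]: "\<phi> i \<in> borel_measurable (N i)" if "i \<in> insert j J" for i
    using insert.prems(1)[OF that] by simp
  let ?S = "\<lambda>y. c + (\<Sum>i\<in>J. \<phi> i (y i))"
  have sum_upd: "(\<Sum>i\<in>J. \<phi> i (if i = j then s else y i)) = (\<Sum>i\<in>J. \<phi> i (y i))" for y s
    using insert.hyps by (auto intro!: sum.cong)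
  have "(\<integral>\<^sup>+y. ennreal ((norm (c + (\<Sum>i\<in>insert j J. \<phi> i (y i))))\<^sup>2) \<partial>PiM (insert j J) N)
      = (\<integral>\<^sup>+y. \<integral>\<^sup>+s. ennreal ((norm (?S y + \<phi> j s))\<^sup>2) \<partial>N j \<partial>PiM J N)"
    using insert.hyps by (subst product_nn_integral_insert) (auto simp: sum_upd algebra_simps)
  also have "\<dots> \<le> (\<integral>\<^sup>+y. ennreal ((norm (?S y))\<^sup>2) + (\<integral>\<^sup>+s. ennreal ((norm (\<phi> j s))\<^sup>2) \<partial>N j) \<partial>PiM J N)"
    using insert.prems by (intro nn_integral_mono Nj.nn_integral_sq_norm_add_centered_le) auto
  also have "\<dots> = (\<integral>\<^sup>+y. ennreal ((norm (?S y))\<^sup>2) \<partial>PiM J N) + (\<integral>\<^sup>+s. ennreal ((norm (\<phi> j s))\<^sup>2) \<partial>N j)"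
    using insert.hyps by (subst nn_integral_add) (auto simp: PJ.emeasure_space_1)
  also have "\<dots> \<le> ennreal ((norm c)\<^sup>2) + (\<Sum>i\<in>J. \<integral>\<^sup>+s. ennreal ((norm (\<phi> i s))\<^sup>2) \<partial>N i)
      + (\<integral>\<^sup>+s. ennreal ((norm (\<phi> j s))\<^sup>2) \<partial>N j)"
    using insert.prems by (intro add_right_mono insert.IH) auto
  finally show ?case
    using insert.hyps by (simp add: add_ac)
qed

lemma (in prob_space) nn_integral_indep_vars_merge:
  fixes W :: "'i \<Rightarrow> 'a \<Rightarrow> 'b" and F :: "('i \<Rightarrow> 'b) \<Rightarrow> ennreal"
  assumes indep: "indep_vars N W UNIV" and law: "\<And>i. distr M (N i) (W i) = N i"
    and disjoint: "P \<inter> Q = {}" and finite: "finite P" "finite Q" and nonempty: "P \<union> Q \<noteq> {}"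
    and F: "F \<in> borel_measurable (PiM (P \<union> Q) N)"
    and local: "\<And>w w'. (\<And>i. i \<in> P \<union> Q \<Longrightarrow> w i = w' i) \<Longrightarrow> F w = F w'"
  shows "(\<integral>\<^sup>+\<omega>. F (\<lambda>i. W i \<omega>) \<partial>M) = (\<integral>\<^sup>+x. \<integral>\<^sup>+y. F (merge P Q (x, y)) \<partial>PiM Q N \<partial>PiM P N)"
proof -
  have W: "W i \<in> measurable M (N i)" for i
    using indep unfolding indep_vars_def2 by auto
  have "prob_space (N i)" for i
    using prob_space_distr[OF W, of i] law by simp
  then interpret product_sigma_finite N
    by (simp add: product_sigma_finite_def prob_space_imp_sigma_finite)
  have "distr M (PiM (P \<union> Q) N) (\<lambda>\<omega>. \<lambda>i\<in>P \<union> Q. W i \<omega>) = PiM (P \<union> Q) (\<lambda>i. distr M (N i) (W i))"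
    using indep_vars_subset[OF indep] indep_vars_iff_distr_eq_PiM'[OF nonempty] W by auto
  also have "\<dots> = PiM (P \<union> Q) N"
    by (simp add: law)
  finally have distr_eq: "distr M (PiM (P \<union> Q) N) (\<lambda>\<omega>. \<lambda>i\<in>P \<union> Q. W i \<omega>) = PiM (P \<union> Q) N" .
  have "(\<integral>\<^sup>+\<omega>. F (\<lambda>i. W i \<omega>) \<partial>M) = (\<integral>\<^sup>+\<omega>. F (\<lambda>i\<in>P \<union> Q. W i \<omega>) \<partial>M)"
    by (intro nn_integral_cong local) simp
  also have "\<dots> = (\<integral>\<^sup>+w. F w \<partial>PiM (P \<union> Q) N)"
    using F W by (subst distr_eq[symmetric], subst nn_integral_distr) (auto intro!: measurable_restrict simp: distr_eq)
  also have "\<dots> = (\<integral>\<^sup>+x. \<integral>\<^sup>+y. F (merge P Q (x, y)) \<partial>PiM Q N \<partial>PiM P N)"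
    using disjoint finite F by (rule product_nn_integral_fold)
  finally show ?thesis .
qed

lemma nn_integral_ennreal_lincomb:
  assumes a: "\<And>i. i \<in> I \<Longrightarrow> a i \<in> borel_measurable M" and b: "b \<in> borel_measurable M"
    and nonneg: "\<And>i x. i \<in> I \<Longrightarrow> 0 \<le> a i x" "\<And>x. 0 \<le> b x" "0 \<le> \<alpha>" "0 \<le> \<beta>"
  shows "(\<integral>\<^sup>+x. ennreal (\<alpha> * (\<Sum>i\<in>I. a i x) + \<beta> * b x) \<partial>M)
    = ennreal \<alpha> * (\<Sum>i\<in>I. \<integral>\<^sup>+x. ennreal (a i x) \<partial>M) + ennreal \<beta> * (\<integral>\<^sup>+x. ennreal (b x) \<partial>M)"
proof -
  have "(\<integral>\<^sup>+x. ennreal (\<alpha> * (\<Sum>i\<in>I. a i x) + \<beta> * b x) \<partial>M)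
      = (\<integral>\<^sup>+x. ennreal \<alpha> * (\<Sum>i\<in>I. ennreal (a i x)) + ennreal \<beta> * ennreal (b x) \<partial>M)"
    using nonneg by (intro nn_integral_cong) (simp add: sum_nonneg ennreal_mult)
  also have "\<dots> = ennreal \<alpha> * (\<Sum>i\<in>I. \<integral>\<^sup>+x. ennreal (a i x) \<partial>M) + ennreal \<beta> * (\<integral>\<^sup>+x. ennreal (b x) \<partial>M)"
    using a b by (simp add: nn_integral_add nn_integral_cmult nn_integral_sum)
  finally show ?thesis .
qed

definition ec_V :: "(nat \<Rightarrow> 'v::real_normed_vector \<Rightarrow> 's \<Rightarrow> 'v) \<Rightarrow> ('v \<Rightarrow> 's \<Rightarrow> 'v) \<Rightarrow> nat \<Rightarrow> real \<Rightarrow> real \<Rightarrow> 'v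
    \<Rightarrow> (call \<Rightarrow> 's) \<Rightarrow> nat \<Rightarrow> nat \<Rightarrow> 'v" where
  "ec_V g C n \<gamma> \<eta> x0 w t i =
     \<eta> *\<^sub>R ec_e g C n \<gamma> \<eta> x0 w t i + ec_g g C n \<gamma> \<eta> x0 w t i - ec_h g C n \<gamma> \<eta> x0 w t i"

definition ec_D :: "(nat \<Rightarrow> 'v::real_normed_vector \<Rightarrow> 's \<Rightarrow> 'v) \<Rightarrow> ('v \<Rightarrow> 's \<Rightarrow> 'v) \<Rightarrow> nat \<Rightarrow> real \<Rightarrow> real \<Rightarrow> 'v
    \<Rightarrow> (call \<Rightarrow> 's) \<Rightarrow> nat \<Rightarrow> nat \<Rightarrow> 'v" where
  "ec_D g C n \<gamma> \<eta> x0 w t i = C (ec_V g C n \<gamma> \<eta> x0 w t i) (w (Comp t i))"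

lemma ec_0 [simp]:
  "ec_x g C n \<gamma> \<eta> x0 w 0 = x0"
  "ec_e g C n \<gamma> \<eta> x0 w 0 i = 0"
  "ec_h g C n \<gamma> \<eta> x0 w 0 i = g i x0 (w (Oracle 0 i))"
  by (simp_all add: ec_x_def ec_e_def ec_h_def)

lemma ec_e_h_Suc [simp]:
  "ec_e g C n \<gamma> \<eta> x0 w (Suc t) i =
     ec_e g C n \<gamma> \<eta> x0 w t i + ec_g g C n \<gamma> \<eta> x0 w t i - ec_h g C n \<gamma> \<eta> x0 w t i - ec_D g C n \<gamma> \<eta> x0 w t i"
  "ec_h g C n \<gamma> \<eta> x0 w (Suc t) i = ec_h g C n \<gamma> \<eta> x0 w t i + ec_D g C n \<gamma> \<eta> x0 w t i"
  by (simp_all add: ec_x_def ec_e_def ec_h_def ec_g_def ec_D_def ec_V_def Let_def case_prod_beta)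

lemma econtrol_h_mean:
  "snd (snd (snd (econtrol g C n \<gamma> \<eta> x0 w t))) = (1 / real n) *\<^sub>R (\<Sum>i<n. ec_h g C n \<gamma> \<eta> x0 w t i)"
proof (induction t)
  case (Suc t)
  then show ?case
    by (simp add: Let_def case_prod_beta ec_x_def ec_h_def ec_g_def ec_D_def ec_V_def ec_e_def
        sum.distrib scaleR_add_right)
qed (simp add: ec_h_def)

lemma ec_x_Suc [simp]:
  "ec_x g C n \<gamma> \<eta> x0 w (Suc t) =
     ec_x g C n \<gamma> \<eta> x0 w t - (\<gamma> / real n) *\<^sub>R (\<Sum>i<n. ec_h g C n \<gamma> \<eta> x0 w t i + ec_D g C n \<gamma> \<eta> x0 w t i)"
  using econtrol_h_mean[of g C n \<gamma> \<eta> x0 w t]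
  by (simp add: Let_def case_prod_beta ec_x_def ec_h_def ec_g_def ec_D_def ec_V_def ec_e_def
      sum.distrib scaleR_add_right algebra_simps)

lemma ec_x_Suc_diff:
  "ec_x g C n \<gamma> \<eta> x0 w (Suc t) - ec_x g C n \<gamma> \<eta> x0 w t =
     - \<gamma> *\<^sub>R ((1 / real n) *\<^sub>R (\<Sum>i<n. ec_D g C n \<gamma> \<eta> x0 w t i - ec_V g C n \<gamma> \<eta> x0 w t i)
       + (1 / real n) *\<^sub>R (\<Sum>i<n. \<eta> *\<^sub>R ec_e g C n \<gamma> \<eta> x0 w t i + ec_g g C n \<gamma> \<eta> x0 w t i))"
proof -
  have "(\<Sum>i<n. ec_h g C n \<gamma> \<eta> x0 w t i + ec_D g C n \<gamma> \<eta> x0 w t i)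
      = (\<Sum>i<n. ec_D g C n \<gamma> \<eta> x0 w t i - ec_V g C n \<gamma> \<eta> x0 w t i)
        + (\<Sum>i<n. \<eta> *\<^sub>R ec_e g C n \<gamma> \<eta> x0 w t i + ec_g g C n \<gamma> \<eta> x0 w t i)"
    unfolding sum.distrib[symmetric] by (rule sum.cong) (simp_all add: ec_V_def)
  then show ?thesis
    by (simp add: scaleR_add_right)
qed

lemma sq_norm_ec_step_le:
  "(norm (ec_x g C n \<gamma> \<eta> x0 w (Suc t) - ec_x g C n \<gamma> \<eta> x0 w t))\<^sup>2
    \<le> 2 * \<gamma>\<^sup>2 / real n * (\<Sum>i<n. (norm (ec_D g C n \<gamma> \<eta> x0 w t i - ec_V g C n \<gamma> \<eta> x0 w t i))\<^sup>2)
      + 2 * \<gamma>\<^sup>2 * (norm ((1 / real n) *\<^sub>R (\<Sum>i<n. \<eta> *\<^sub>R ec_e g C n \<gamma> \<eta> x0 w t i + ec_g g C n \<gamma> \<eta> x0 w t i)))\<^sup>2"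
proof -
  let ?A = "(1 / real n) *\<^sub>R (\<Sum>i<n. ec_D g C n \<gamma> \<eta> x0 w t i - ec_V g C n \<gamma> \<eta> x0 w t i)"
  let ?B = "(1 / real n) *\<^sub>R (\<Sum>i<n. \<eta> *\<^sub>R ec_e g C n \<gamma> \<eta> x0 w t i + ec_g g C n \<gamma> \<eta> x0 w t i)"
  have "(norm (ec_x g C n \<gamma> \<eta> x0 w (Suc t) - ec_x g C n \<gamma> \<eta> x0 w t))\<^sup>2 = \<gamma>\<^sup>2 * (norm (?A + ?B))\<^sup>2"
    unfolding ec_x_Suc_diff by (simp add: power_mult_distrib)
  also have "\<dots> \<le> \<gamma>\<^sup>2 * (2 * (norm ?A)\<^sup>2 + 2 * (norm ?B)\<^sup>2)"
    by (intro mult_left_mono norm_add_squared_le) simp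
  also have "\<dots> \<le> \<gamma>\<^sup>2 * (2 * ((1 / real n) * (\<Sum>i<n. (norm (ec_D g C n \<gamma> \<eta> x0 w t i - ec_V g C n \<gamma> \<eta> x0 w t i))\<^sup>2))
      + 2 * (norm ?B)\<^sup>2)"
    using norm_mean_squared_le[of "{..<n}"] by (intro mult_left_mono add_right_mono) auto
  finally show ?thesis
    by (simp add: algebra_simps)
qed

definition ec_calls :: "nat \<Rightarrow> nat \<Rightarrow> call set" where
  "ec_calls n t = case_prod Oracle ` ({..t} \<times> {..<n}) \<union> case_prod Comp ` ({..<t} \<times> {..<n})"

lemma ec_calls_iff [simp]:
  "Oracle s i \<in> ec_calls n t \<longleftrightarrow> s \<le> t \<and> i < n"
  "Comp s i \<in> ec_calls n t \<longleftrightarrow> s < t \<and> i < n"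
  by (auto simp: ec_calls_def)

lemma finite_ec_calls: "finite (ec_calls n t)"
  by (simp add: ec_calls_def)

lemma ec_calls_Suc: "c \<in> ec_calls n t \<Longrightarrow> c \<in> ec_calls n (Suc t)"
  by (cases c) auto

lemma ec_step_cong:
  assumes "w (Oracle (Suc t) i) = w' (Oracle (Suc t) i)"
    and state: "ec_x g C n \<gamma> \<eta> x0 w t = ec_x g C n \<gamma> \<eta> x0 w' t"
      "ec_e g C n \<gamma> \<eta> x0 w t i = ec_e g C n \<gamma> \<eta> x0 w' t i" "ec_h g C n \<gamma> \<eta> x0 w t i = ec_h g C n \<gamma> \<eta> x0 w' t i"
  shows "ec_g g C n \<gamma> \<eta> x0 w t i = ec_g g C n \<gamma> \<eta> x0 w' t i"
    and "ec_V g C n \<gamma> \<eta> x0 w t i = ec_V g C n \<gamma> \<eta> x0 w' t i"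
    and "w (Comp t i) = w' (Comp t i) \<Longrightarrow> ec_D g C n \<gamma> \<eta> x0 w t i = ec_D g C n \<gamma> \<eta> x0 w' t i"
  using assms by (simp_all add: ec_g_def ec_V_def ec_D_def)

lemma ec_state_cong:
  assumes "\<And>c. c \<in> ec_calls n t \<Longrightarrow> w c = w' c"
  shows "ec_x g C n \<gamma> \<eta> x0 w t = ec_x g C n \<gamma> \<eta> x0 w' t \<and>
    (\<forall>i<n. ec_e g C n \<gamma> \<eta> x0 w t i = ec_e g C n \<gamma> \<eta> x0 w' t i \<and> ec_h g C n \<gamma> \<eta> x0 w t i = ec_h g C n \<gamma> \<eta> x0 w' t i)"
  using assms
proof (induction t)
  case (Suc t)
  then have state: "ec_x g C n \<gamma> \<eta> x0 w t = ec_x g C n \<gamma> \<eta> x0 w' t \<and>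
    (\<forall>i<n. ec_e g C n \<gamma> \<eta> x0 w t i = ec_e g C n \<gamma> \<eta> x0 w' t i \<and> ec_h g C n \<gamma> \<eta> x0 w t i = ec_h g C n \<gamma> \<eta> x0 w' t i)"
    using ec_calls_Suc by blast
  have "ec_g g C n \<gamma> \<eta> x0 w t i = ec_g g C n \<gamma> \<eta> x0 w' t i \<and> ec_D g C n \<gamma> \<eta> x0 w t i = ec_D g C n \<gamma> \<eta> x0 w' t i"
    if "i < n" for i
    using ec_step_cong[of w t i w' g C n \<gamma> \<eta> x0] Suc.prems state that by simp
  with state show ?case
    by (auto intro!: sum.cong)
qed simp

lemma ec_state_merge:
  assumes "ec_calls n t \<subseteq> P"
  shows "ec_x g C n \<gamma> \<eta> x0 (merge P Q (x, y)) t = ec_x g C n \<gamma> \<eta> x0 x t \<and>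
    (\<forall>i<n. ec_e g C n \<gamma> \<eta> x0 (merge P Q (x, y)) t i = ec_e g C n \<gamma> \<eta> x0 x t i \<and>
      ec_h g C n \<gamma> \<eta> x0 (merge P Q (x, y)) t i = ec_h g C n \<gamma> \<eta> x0 x t i)"
  using assms by (intro ec_state_cong) (auto simp: merge_def)

lemma ec_cong:
  assumes agree: "\<And>c. c \<in> ec_calls n (Suc t) \<Longrightarrow> w c = w' c" and "i < n"
  shows "ec_x g C n \<gamma> \<eta> x0 w t = ec_x g C n \<gamma> \<eta> x0 w' t"
    and "ec_e g C n \<gamma> \<eta> x0 w t i = ec_e g C n \<gamma> \<eta> x0 w' t i"
    and "ec_g g C n \<gamma> \<eta> x0 w t i = ec_g g C n \<gamma> \<eta> x0 w' t i"
    and "ec_V g C n \<gamma> \<eta> x0 w t i = ec_V g C n \<gamma> \<eta> x0 w' t i"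
    and "ec_D g C n \<gamma> \<eta> x0 w t i = ec_D g C n \<gamma> \<eta> x0 w' t i"
proof -
  have state: "ec_x g C n \<gamma> \<eta> x0 w t = ec_x g C n \<gamma> \<eta> x0 w' t \<and>
    (\<forall>i<n. ec_e g C n \<gamma> \<eta> x0 w t i = ec_e g C n \<gamma> \<eta> x0 w' t i \<and> ec_h g C n \<gamma> \<eta> x0 w t i = ec_h g C n \<gamma> \<eta> x0 w' t i)"
    using agree ec_calls_Suc by (intro ec_state_cong) blast
  then show "ec_x g C n \<gamma> \<eta> x0 w t = ec_x g C n \<gamma> \<eta> x0 w' t"
    "ec_e g C n \<gamma> \<eta> x0 w t i = ec_e g C n \<gamma> \<eta> x0 w' t i"
    using \<open>i < n\<close> by auto
  show "ec_g g C n \<gamma> \<eta> x0 w t i = ec_g g C n \<gamma> \<eta> x0 w' t i"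
    "ec_V g C n \<gamma> \<eta> x0 w t i = ec_V g C n \<gamma> \<eta> x0 w' t i"
    "ec_D g C n \<gamma> \<eta> x0 w t i = ec_D g C n \<gamma> \<eta> x0 w' t i"
    using ec_step_cong[of w t i w' g C n \<gamma> \<eta> x0] agree[of "Oracle (Suc t) i"] agree[of "Comp t i"]
      state \<open>i < n\<close> by simp_all
qed

definition call_space :: "(nat \<Rightarrow> 's measure) \<Rightarrow> 's measure \<Rightarrow> call \<Rightarrow> 's measure" where
  "call_space SG SC c = (case c of Oracle _ i \<Rightarrow> SG i | Comp _ _ \<Rightarrow> SC)"

lemma call_space_simps [simp]:
  "call_space SG SC (Oracle s i) = SG i"
  "call_space SG SC (Comp s i) = SC"
  by (simp_all add: call_space_def)

locale econtrol_setting = prob_space M for M :: "'a measure" +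
  fixes W :: "call \<Rightarrow> 'a \<Rightarrow> 's" and SG :: "nat \<Rightarrow> 's measure" and SC :: "'s measure"
    and g :: "nat \<Rightarrow> 'v::euclidean_space \<Rightarrow> 's \<Rightarrow> 'v" and C :: "'v \<Rightarrow> 's \<Rightarrow> 'v"
    and gradi :: "nat \<Rightarrow> 'v \<Rightarrow> 'v" and n :: nat and \<delta> \<sigma> \<gamma> \<eta> :: real and x0 :: 'v
  assumes n_pos: "n > 0" and \<delta>_le_1: "\<delta> \<le> 1"
    and indep: "indep_vars (call_space SG SC) W UNIV"
    and law: "\<And>c. distr M (call_space SG SC c) (W c) = call_space SG SC c"
    and g_measurable: "\<And>i. i < n \<Longrightarrow> (\<lambda>p. g i (fst p) (snd p)) \<in> borel_measurable (borel \<Otimes>\<^sub>M SG i)"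
    and g_unbiased: "\<And>i x. i < n \<Longrightarrow> integrable (SG i) (g i x) \<and> (\<integral>s. g i x s \<partial>SG i) = gradi i x"
    and g_variance: "\<And>i x. i < n \<Longrightarrow>
      (\<integral>\<^sup>+s. ennreal ((norm (g i x s - gradi i x))\<^sup>2) \<partial>SG i) \<le> ennreal (\<sigma>\<^sup>2)"
    and C_measurable: "(\<lambda>p. C (fst p) (snd p)) \<in> borel_measurable (borel \<Otimes>\<^sub>M SC)"
    and C_contraction: "\<And>v. (\<integral>\<^sup>+s. ennreal ((norm (C v s - v))\<^sup>2) \<partial>SC) \<le> ennreal ((1 - \<delta>) * (norm v)\<^sup>2)"
begin

abbreviation "xt w t \<equiv> ec_x g C n \<gamma> \<eta> x0 w t"
abbreviation "et w t i \<equiv> ec_e g C n \<gamma> \<eta> x0 w t i"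
abbreviation "ht w t i \<equiv> ec_h g C n \<gamma> \<eta> x0 w t i"
abbreviation "gt w t i \<equiv> ec_g g C n \<gamma> \<eta> x0 w t i"
abbreviation "Vt w t i \<equiv> ec_V g C n \<gamma> \<eta> x0 w t i"
abbreviation "Dt w t i \<equiv> ec_D g C n \<gamma> \<eta> x0 w t i"

abbreviation mean_sq :: "((call \<Rightarrow> 's) \<Rightarrow> 'v) \<Rightarrow> ennreal" where
  "mean_sq F \<equiv> \<integral>\<^sup>+\<omega>. ennreal ((norm (F (\<lambda>c. W c \<omega>)))\<^sup>2) \<partial>M"

lemma W_measurable: "W c \<in> measurable M (call_space SG SC c)"
  using indep unfolding indep_vars_def2 by auto

lemma prob_space_call_space: "prob_space (call_space SG SC c)"
  using prob_space_distr[OF W_measurable] law by simp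

lemma product_sigma_finite_call_space: "product_sigma_finite (call_space SG SC)"
  by (simp add: product_sigma_finite_def prob_space_call_space prob_space_imp_sigma_finite)

lemma gradi_measurable:
  assumes "i < n"
  shows "gradi i \<in> borel_measurable borel"
proof -
  interpret SG: prob_space "SG i"
    using prob_space_call_space[of "Oracle 0 i"] by simp
  have "(\<lambda>x. \<integral>s. g i x s \<partial>SG i) \<in> borel_measurable borel"
    using g_measurable[OF assms] by (intro SG.borel_measurable_lebesgue_integral) (simp add: case_prod_beta)
  then show ?thesis
    using g_unbiased[OF assms] by simp
qed

lemma ec_step_measurable:
  assumes coords: "(\<lambda>z. w z (Oracle (Suc t) i)) \<in> measurable N (SG i)" "(\<lambda>z. w z (Comp t i)) \<in> measurable N SC"
    and state: "(\<lambda>z. xt (w z) t) \<in> borel_measurable N"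
      "(\<lambda>z. et (w z) t i) \<in> borel_measurable N" "(\<lambda>z. ht (w z) t i) \<in> borel_measurable N"
    and "i < n"
  shows "(\<lambda>z. gt (w z) t i) \<in> borel_measurable N"
    and "(\<lambda>z. Vt (w z) t i) \<in> borel_measurable N"
    and "(\<lambda>z. Dt (w z) t i) \<in> borel_measurable N"
proof -
  show "(\<lambda>z. gt (w z) t i) \<in> borel_measurable N"
    using measurable_compose[OF measurable_Pair[OF state(1) coords(1)] g_measurable[OF \<open>i < n\<close>]]
    by (simp add: ec_g_def)
  then show V: "(\<lambda>z. Vt (w z) t i) \<in> borel_measurable N"
    using state unfolding ec_V_def by measurable
  show "(\<lambda>z. Dt (w z) t i) \<in> borel_measurable N"
    using measurable_compose[OF measurable_Pair[OF V coords(2)] C_measurable]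
    by (simp add: ec_D_def)
qed

lemma ec_state_measurable:
  assumes "\<And>c. c \<in> ec_calls n t \<Longrightarrow> (\<lambda>z. w z c) \<in> measurable N (call_space SG SC c)"
  shows "(\<lambda>z. xt (w z) t) \<in> borel_measurable N \<and>
    (\<forall>i<n. (\<lambda>z. et (w z) t i) \<in> borel_measurable N \<and> (\<lambda>z. ht (w z) t i) \<in> borel_measurable N)"
  using assms
proof (induction t)
  case 0
  have "(\<lambda>z. g i x0 (w z (Oracle 0 i))) \<in> borel_measurable N" if "i < n" for i
  proof -
    have "(\<lambda>z. w z (Oracle 0 i)) \<in> measurable N (SG i)"
      using 0[of "Oracle 0 i"] that by simp
    then show ?thesis
      using measurable_compose[OF measurable_Pair[OF measurable_const[of x0 borel N]] g_measurable[OF that]]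
      by simp
  qed
  then show ?case
    by simp
next
  case (Suc t)
  then have state: "(\<lambda>z. xt (w z) t) \<in> borel_measurable N \<and>
    (\<forall>i<n. (\<lambda>z. et (w z) t i) \<in> borel_measurable N \<and> (\<lambda>z. ht (w z) t i) \<in> borel_measurable N)"
    using ec_calls_Suc by blast
  have "(\<lambda>z. gt (w z) t i) \<in> borel_measurable N \<and> (\<lambda>z. Dt (w z) t i) \<in> borel_measurable N" if "i < n" for i
    using ec_step_measurable[of w t i N] Suc.prems[of "Oracle (Suc t) i"] Suc.prems[of "Comp t i"] state that
    by simp
  with state show ?case
    by (auto intro!: borel_measurable_sum borel_measurable_add borel_measurable_diff borel_measurable_scaleR)
qed

lemma ec_measurable:
  assumes "\<And>c. c \<in> ec_calls n (Suc t) \<Longrightarrow> (\<lambda>z. w z c) \<in> measurable N (call_space SG SC c)" and "i < n"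
  shows "(\<lambda>z. xt (w z) t) \<in> borel_measurable N"
    and "(\<lambda>z. et (w z) t i) \<in> borel_measurable N"
    and "(\<lambda>z. gt (w z) t i) \<in> borel_measurable N"
    and "(\<lambda>z. Vt (w z) t i) \<in> borel_measurable N"
    and "(\<lambda>z. Dt (w z) t i) \<in> borel_measurable N"
proof -
  have state: "(\<lambda>z. xt (w z) t) \<in> borel_measurable N \<and>
    (\<forall>i<n. (\<lambda>z. et (w z) t i) \<in> borel_measurable N \<and> (\<lambda>z. ht (w z) t i) \<in> borel_measurable N)"
    using assms(1) ec_calls_Suc by (intro ec_state_measurable) blast
  then show "(\<lambda>z. xt (w z) t) \<in> borel_measurable N" "(\<lambda>z. et (w z) t i) \<in> borel_measurable N"
    using \<open>i < n\<close> by auto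
  show "(\<lambda>z. gt (w z) t i) \<in> borel_measurable N" "(\<lambda>z. Vt (w z) t i) \<in> borel_measurable N"
    "(\<lambda>z. Dt (w z) t i) \<in> borel_measurable N"
    using ec_step_measurable[of w t i N] assms(1)[of "Oracle (Suc t) i"] assms(1)[of "Comp t i"] assms(2) state
    by simp_all
qed

lemma ec_measurable_PiM:
  fixes t :: nat
  defines "N \<equiv> PiM (ec_calls n (Suc t)) (call_space SG SC)"
  shows "(\<lambda>w. xt w t) \<in> borel_measurable N"
    and "i < n \<Longrightarrow> (\<lambda>w. et w t i) \<in> borel_measurable N"
    and "i < n \<Longrightarrow> (\<lambda>w. gt w t i) \<in> borel_measurable N"
    and "i < n \<Longrightarrow> (\<lambda>w. Vt w t i) \<in> borel_measurable N"
    and "i < n \<Longrightarrow> (\<lambda>w. Dt w t i) \<in> borel_measurable N"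
proof -
  have coords: "(\<lambda>w. w c) \<in> measurable N (call_space SG SC c)" if "c \<in> ec_calls n (Suc t)" for c
    unfolding N_def using that by (rule measurable_component_singleton)
  show "(\<lambda>w. xt w t) \<in> borel_measurable N"
    using ec_measurable(1)[of t "\<lambda>w. w" N, OF coords n_pos] by simp
  show "(\<lambda>w. et w t i) \<in> borel_measurable N" "(\<lambda>w. gt w t i) \<in> borel_measurable N"
    "(\<lambda>w. Vt w t i) \<in> borel_measurable N" "(\<lambda>w. Dt w t i) \<in> borel_measurable N" if "i < n"
    using ec_measurable(2-5)[of t "\<lambda>w. w" N, OF coords that] by simp_all
qed

lemma ec_measurable_M:
  shows "(\<lambda>\<omega>. xt (\<lambda>c. W c \<omega>) t) \<in> borel_measurable M"
    and "i < n \<Longrightarrow> (\<lambda>\<omega>. et (\<lambda>c. W c \<omega>) t i) \<in> borel_measurable M"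
    and "i < n \<Longrightarrow> (\<lambda>\<omega>. gt (\<lambda>c. W c \<omega>) t i) \<in> borel_measurable M"
    and "i < n \<Longrightarrow> (\<lambda>\<omega>. Vt (\<lambda>c. W c \<omega>) t i) \<in> borel_measurable M"
    and "i < n \<Longrightarrow> (\<lambda>\<omega>. Dt (\<lambda>c. W c \<omega>) t i) \<in> borel_measurable M"
  using ec_measurable(1)[of t "\<lambda>\<omega> c. W c \<omega>" M, OF W_measurable n_pos]
    ec_measurable(2-5)[of t "\<lambda>\<omega> c. W c \<omega>" M, OF W_measurable] by simp_all

lemma nn_integral_seeds_mono_merge:
  assumes disjoint: "P \<inter> Q = {}" and calls: "P \<union> Q = ec_calls n (Suc t)"
    and measurable: "G1 \<in> borel_measurable (PiM (ec_calls n (Suc t)) (call_space SG SC))"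
      "G2 \<in> borel_measurable (PiM (ec_calls n (Suc t)) (call_space SG SC))"
    and local: "\<And>w w'. (\<And>c. c \<in> ec_calls n (Suc t) \<Longrightarrow> w c = w' c) \<Longrightarrow> G1 w = G1 w'"
      "\<And>w w'. (\<And>c. c \<in> ec_calls n (Suc t) \<Longrightarrow> w c = w' c) \<Longrightarrow> G2 w = G2 w'"
    and inner: "\<And>x. (\<integral>\<^sup>+y. G1 (merge P Q (x, y)) \<partial>PiM Q (call_space SG SC))
      \<le> (\<integral>\<^sup>+y. G2 (merge P Q (x, y)) \<partial>PiM Q (call_space SG SC))"
  shows "(\<integral>\<^sup>+\<omega>. G1 (\<lambda>c. W c \<omega>) \<partial>M) \<le> (\<integral>\<^sup>+\<omega>. G2 (\<lambda>c. W c \<omega>) \<partial>M)"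
proof -
  have "finite P" "finite Q"
    using finite_ec_calls[of n "Suc t"] unfolding calls[symmetric] by auto
  moreover have "P \<union> Q \<noteq> {}"
    unfolding calls using n_pos ec_calls_iff(1)[of 0 0 n "Suc t"] by blast
  ultimately have split: "(\<integral>\<^sup>+\<omega>. G (\<lambda>c. W c \<omega>) \<partial>M)
      = (\<integral>\<^sup>+x. \<integral>\<^sup>+y. G (merge P Q (x, y)) \<partial>PiM Q (call_space SG SC) \<partial>PiM P (call_space SG SC))"
    if G_measurable: "G \<in> borel_measurable (PiM (ec_calls n (Suc t)) (call_space SG SC))"
      and G_local: "\<And>w w'. (\<And>c. c \<in> ec_calls n (Suc t) \<Longrightarrow> w c = w' c) \<Longrightarrow> G w = G w'" for G
  proof (rule nn_integral_indep_vars_merge[OF indep law disjoint])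
    show "G \<in> borel_measurable (PiM (P \<union> Q) (call_space SG SC))"
      unfolding calls by (rule G_measurable)
    show "G w = G w'" if "\<And>c. c \<in> P \<union> Q \<Longrightarrow> w c = w' c" for w w'
      using that unfolding calls by (rule G_local)
  qed
  have "(\<integral>\<^sup>+\<omega>. G1 (\<lambda>c. W c \<omega>) \<partial>M)
      = (\<integral>\<^sup>+x. \<integral>\<^sup>+y. G1 (merge P Q (x, y)) \<partial>PiM Q (call_space SG SC) \<partial>PiM P (call_space SG SC))"
    by (rule split[OF measurable(1) local(1)])
  also have "\<dots> \<le> (\<integral>\<^sup>+x. \<integral>\<^sup>+y. G2 (merge P Q (x, y)) \<partial>PiM Q (call_space SG SC) \<partial>PiM P (call_space SG SC))"
    by (intro nn_integral_mono inner)
  also have "\<dots> = (\<integral>\<^sup>+\<omega>. G2 (\<lambda>c. W c \<omega>) \<partial>M)"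
    by (rule split[OF measurable(2) local(2), symmetric])
  finally show ?thesis .
qed

lemma nn_integral_compression_error_le:
  "(\<integral>\<^sup>+y. ennreal ((norm (C v (y (Comp t i)) - v))\<^sup>2) \<partial>PiM {Comp t i} (call_space SG SC))
    \<le> ennreal (1 - \<delta>) * ennreal ((norm v)\<^sup>2)"
proof -
  interpret product_sigma_finite "call_space SG SC"
    by (rule product_sigma_finite_call_space)
  have [measurable]: "C v \<in> borel_measurable SC"
    using measurable_compose[OF measurable_Pair[OF measurable_const[of v borel SC] measurable_ident_sets[OF refl]]
        C_measurable] by simp
  have "(\<integral>\<^sup>+y. ennreal ((norm (C v (y (Comp t i)) - v))\<^sup>2) \<partial>PiM {Comp t i} (call_space SG SC))
      = (\<integral>\<^sup>+s. ennreal ((norm (C v s - v))\<^sup>2) \<partial>SC)"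
    by (subst product_nn_integral_singleton) simp_all
  also have "\<dots> \<le> ennreal (1 - \<delta>) * ennreal ((norm v)\<^sup>2)"
    using C_contraction[of v] \<delta>_le_1 by (simp add: ennreal_mult)
  finally show ?thesis .
qed

lemma mean_sq_compression_error_le:
  assumes i: "i < n"
  shows "mean_sq (\<lambda>w. Dt w t i - Vt w t i) \<le> ennreal (1 - \<delta>) * mean_sq (\<lambda>w. Vt w t i)"
proof -
  define P where "P = ec_calls n (Suc t) - {Comp t i}"
  have disjoint: "P \<inter> {Comp t i} = {}" and calls: "P \<union> {Comp t i} = ec_calls n (Suc t)"
    using i by (auto simp: P_def)
  interpret Pk: prob_space "PiM {Comp t i} (call_space SG SC)"
    by (intro prob_space_PiM prob_space_call_space)
  have V_merge: "Vt (merge P {Comp t i} (x, y)) t i = Vt x t i" for x y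
  proof (rule ec_step_cong)
    have "ec_calls n t \<subseteq> P"
      using ec_calls_Suc by (force simp: P_def)
    note state_merge = ec_state_merge[where g=g and C=C and \<gamma>=\<gamma> and \<eta>=\<eta> and ?x0.0=x0 and Q="{Comp t i}", OF this]
    then show "xt (merge P {Comp t i} (x, y)) t = xt x t"
      "et (merge P {Comp t i} (x, y)) t i = et x t i" "ht (merge P {Comp t i} (x, y)) t i = ht x t i"
      using i by simp_all
    show "merge P {Comp t i} (x, y) (Oracle (Suc t) i) = x (Oracle (Suc t) i)"
      using i by (simp add: P_def merge_def)
  qed
  have D_merge: "Dt (merge P {Comp t i} (x, y)) t i = C (Vt x t i) (y (Comp t i))" for x y
    unfolding ec_D_def V_merge using disjoint by (simp add: merge_def)
  have "(\<integral>\<^sup>+\<omega>. ennreal ((norm (Dt (\<lambda>c. W c \<omega>) t i - Vt (\<lambda>c. W c \<omega>) t i))\<^sup>2) \<partial>M)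
      \<le> (\<integral>\<^sup>+\<omega>. ennreal (1 - \<delta>) * ennreal ((norm (Vt (\<lambda>c. W c \<omega>) t i))\<^sup>2) \<partial>M)"
  proof (rule nn_integral_seeds_mono_merge[OF disjoint calls])
    show "(\<lambda>w. ennreal ((norm (Dt w t i - Vt w t i))\<^sup>2)) \<in> borel_measurable (PiM (ec_calls n (Suc t)) (call_space SG SC))"
      "(\<lambda>w. ennreal (1 - \<delta>) * ennreal ((norm (Vt w t i))\<^sup>2)) \<in> borel_measurable (PiM (ec_calls n (Suc t)) (call_space SG SC))"
      using ec_measurable_PiM i by measurable
    show "ennreal ((norm (Dt w t i - Vt w t i))\<^sup>2) = ennreal ((norm (Dt w' t i - Vt w' t i))\<^sup>2)"
      "ennreal (1 - \<delta>) * ennreal ((norm (Vt w t i))\<^sup>2) = ennreal (1 - \<delta>) * ennreal ((norm (Vt w' t i))\<^sup>2)"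
      if "\<And>c. c \<in> ec_calls n (Suc t) \<Longrightarrow> w c = w' c" for w w'
      using ec_cong[where w=w and w'=w' and t=t and g=g and C=C and \<gamma>=\<gamma> and \<eta>=\<eta> and ?x0.0=x0, OF that i]
      by simp_all
    show "(\<integral>\<^sup>+y. ennreal ((norm (Dt (merge P {Comp t i} (x, y)) t i - Vt (merge P {Comp t i} (x, y)) t i))\<^sup>2) \<partial>PiM {Comp t i} (call_space SG SC))
        \<le> (\<integral>\<^sup>+y. ennreal (1 - \<delta>) * ennreal ((norm (Vt (merge P {Comp t i} (x, y)) t i))\<^sup>2) \<partial>PiM {Comp t i} (call_space SG SC))" for x
      using nn_integral_compression_error_le[of t i "Vt x t i"] unfolding D_merge V_merge
      by (simp add: Pk.emeasure_space_1)
  qed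
  also have "\<dots> = ennreal (1 - \<delta>) * mean_sq (\<lambda>w. Vt w t i)"
    using ec_measurable_M(4)[OF i] by (intro nn_integral_cmult) measurable
  finally show ?thesis .
qed

lemma oracle_noise_le:
  assumes i: "i < n"
  shows "(\<integral>\<^sup>+s. ennreal ((norm (a *\<^sub>R (g i x s - gradi i x)))\<^sup>2) \<partial>SG i) \<le> ennreal (a\<^sup>2 * \<sigma>\<^sup>2)"
proof -
  have [measurable]: "g i x \<in> borel_measurable (SG i)"
    using measurable_compose[OF measurable_Pair[OF measurable_const[of x borel "SG i"] measurable_ident_sets[OF refl]]
        g_measurable[OF i]] by simp
  have "(\<integral>\<^sup>+s. ennreal ((norm (a *\<^sub>R (g i x s - gradi i x)))\<^sup>2) \<partial>SG i)
      = ennreal (a\<^sup>2) * (\<integral>\<^sup>+s. ennreal ((norm (g i x s - gradi i x))\<^sup>2) \<partial>SG i)"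
    by (simp add: power_mult_distrib ennreal_mult nn_integral_cmult)
  also have "\<dots> \<le> ennreal (a\<^sup>2) * ennreal (\<sigma>\<^sup>2)"
    by (intro mult_left_mono g_variance i) simp
  finally show ?thesis
    by (simp add: ennreal_mult)
qed

lemma nn_integral_oracle_average_le:
  "(\<integral>\<^sup>+y. ennreal ((norm (b + (1 / real n) *\<^sub>R (\<Sum>i<n. g i x (y (Oracle s i)) - gradi i x)))\<^sup>2)
      \<partial>PiM (Oracle s ` {..<n}) (call_space SG SC))
    \<le> ennreal ((norm b)\<^sup>2) + ennreal (\<sigma>\<^sup>2 / real n)"
proof -
  define Q where "Q = Oracle s ` {..<n}"
  define \<phi> where "\<phi> = (\<lambda>c r. case c of Oracle _ j \<Rightarrow> (1 / real n) *\<^sub>R (g j x r - gradi j x) | Comp _ _ \<Rightarrow> 0)"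
  have inj: "inj_on (Oracle s) {..<n}"
    by (simp add: inj_on_def)
  have "(1 / real n) *\<^sub>R (\<Sum>i<n. g i x (y (Oracle s i)) - gradi i x) = (\<Sum>c\<in>Q. \<phi> c (y c))" for y
    unfolding Q_def by (simp add: sum.reindex[OF inj] \<phi>_def scaleR_sum_right)
  then have "(\<integral>\<^sup>+y. ennreal ((norm (b + (1 / real n) *\<^sub>R (\<Sum>i<n. g i x (y (Oracle s i)) - gradi i x)))\<^sup>2)
      \<partial>PiM Q (call_space SG SC))
      = (\<integral>\<^sup>+y. ennreal ((norm (b + (\<Sum>c\<in>Q. \<phi> c (y c))))\<^sup>2) \<partial>PiM Q (call_space SG SC))"
    by simp
  also have "\<dots> \<le> ennreal ((norm b)\<^sup>2) + (\<Sum>c\<in>Q. \<integral>\<^sup>+r. ennreal ((norm (\<phi> c r))\<^sup>2) \<partial>call_space SG SC c)"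
  proof (rule nn_integral_PiM_sq_norm_add_sum_centered_le[OF prob_space_call_space])
    show "finite Q"
      by (simp add: Q_def)
    fix c assume "c \<in> Q"
    then obtain i where i: "i < n" and c: "c = Oracle s i"
      by (auto simp: Q_def)
    interpret SG: prob_space "SG i"
      using prob_space_call_space[of "Oracle 0 i"] by simp
    show "integrable (call_space SG SC c) (\<phi> c)" "(\<integral>r. \<phi> c r \<partial>call_space SG SC c) = 0"
      using g_unbiased[OF i, of x] by (simp_all add: c \<phi>_def SG.prob_space)
  qed
  also have "\<dots> \<le> ennreal ((norm b)\<^sup>2) + ennreal (\<sigma>\<^sup>2 / real n)"
  proof (rule add_left_mono)
    have "(\<Sum>c\<in>Q. \<integral>\<^sup>+r. ennreal ((norm (\<phi> c r))\<^sup>2) \<partial>call_space SG SC c) \<le> (\<Sum>c\<in>Q. ennreal ((1 / real n)\<^sup>2 * \<sigma>\<^sup>2))"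
    proof (rule sum_mono)
      fix c assume "c \<in> Q"
      then obtain i where "i < n" "c = Oracle s i"
        by (auto simp: Q_def)
      then show "(\<integral>\<^sup>+r. ennreal ((norm (\<phi> c r))\<^sup>2) \<partial>call_space SG SC c) \<le> ennreal ((1 / real n)\<^sup>2 * \<sigma>\<^sup>2)"
        using oracle_noise_le[of i "1 / real n" x] by (simp add: \<phi>_def)
    qed
    also have "\<dots> = ennreal (\<sigma>\<^sup>2 / real n)"
      using card_image[OF inj] n_pos by (subst sum_ennreal) (simp_all add: Q_def power2_eq_square)
    finally show "(\<Sum>c\<in>Q. \<integral>\<^sup>+r. ennreal ((norm (\<phi> c r))\<^sup>2) \<partial>call_space SG SC c) \<le> ennreal (\<sigma>\<^sup>2 / real n)" .
  qed
  finally show ?thesis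
    unfolding Q_def .
qed

lemma ec_gradient_averages_measurable:
  assumes "\<And>c. c \<in> ec_calls n (Suc t) \<Longrightarrow> (\<lambda>z. w z c) \<in> measurable N (call_space SG SC c)"
  shows "(\<lambda>z. (1 / real n) *\<^sub>R (\<Sum>i<n. \<eta> *\<^sub>R et (w z) t i + gt (w z) t i)) \<in> borel_measurable N"
    and "(\<lambda>z. (1 / real n) *\<^sub>R (\<Sum>i<n. \<eta> *\<^sub>R et (w z) t i + gradi i (xt (w z) t))) \<in> borel_measurable N"
  using ec_measurable[OF assms] ec_measurable(1)[OF assms n_pos]
  by (auto intro!: borel_measurable_scaleR borel_measurable_sum borel_measurable_add
      measurable_compose[OF _ gradi_measurable])

lemma ec_gradient_averages_merge:
  assumes "ec_calls n t \<subseteq> P" and "Oracle (Suc t) ` {..<n} \<subseteq> Q - P"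
  shows "(1 / real n) *\<^sub>R (\<Sum>i<n. \<eta> *\<^sub>R et (merge P Q (x, y)) t i + gradi i (xt (merge P Q (x, y)) t))
      = (1 / real n) *\<^sub>R (\<Sum>i<n. \<eta> *\<^sub>R et x t i + gradi i (xt x t))"
    and "(1 / real n) *\<^sub>R (\<Sum>i<n. \<eta> *\<^sub>R et (merge P Q (x, y)) t i + gt (merge P Q (x, y)) t i)
      = (1 / real n) *\<^sub>R (\<Sum>i<n. \<eta> *\<^sub>R et x t i + gradi i (xt x t))
        + (1 / real n) *\<^sub>R (\<Sum>i<n. g i (xt x t) (y (Oracle (Suc t) i)) - gradi i (xt x t))"
proof -
  note state = ec_state_merge[where g=g and C=C and \<gamma>=\<gamma> and \<eta>=\<eta> and ?x0.0=x0 and Q=Q and x=x and y=y, OF assms(1)]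
  then show "(1 / real n) *\<^sub>R (\<Sum>i<n. \<eta> *\<^sub>R et (merge P Q (x, y)) t i + gradi i (xt (merge P Q (x, y)) t))
      = (1 / real n) *\<^sub>R (\<Sum>i<n. \<eta> *\<^sub>R et x t i + gradi i (xt x t))"
    by (auto intro!: sum.cong)
  have "(\<Sum>i<n. \<eta> *\<^sub>R et (merge P Q (x, y)) t i + gt (merge P Q (x, y)) t i)
      = (\<Sum>i<n. \<eta> *\<^sub>R et x t i + g i (xt x t) (y (Oracle (Suc t) i)))"
    using state assms(2) by (intro sum.cong) (auto simp: ec_g_def merge_def)
  then show "(1 / real n) *\<^sub>R (\<Sum>i<n. \<eta> *\<^sub>R et (merge P Q (x, y)) t i + gt (merge P Q (x, y)) t i)
      = (1 / real n) *\<^sub>R (\<Sum>i<n. \<eta> *\<^sub>R et x t i + gradi i (xt x t))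
        + (1 / real n) *\<^sub>R (\<Sum>i<n. g i (xt x t) (y (Oracle (Suc t) i)) - gradi i (xt x t))"
    by (simp add: sum.distrib sum_subtractf scaleR_add_right scaleR_diff_right algebra_simps)
qed

lemma mean_sq_stochastic_gradients_le:
  "mean_sq (\<lambda>w. (1 / real n) *\<^sub>R (\<Sum>i<n. \<eta> *\<^sub>R et w t i + gt w t i))
    \<le> mean_sq (\<lambda>w. (1 / real n) *\<^sub>R (\<Sum>i<n. \<eta> *\<^sub>R et w t i + gradi i (xt w t))) + ennreal (\<sigma>\<^sup>2 / real n)"
proof -
  define Q where "Q = Oracle (Suc t) ` {..<n}"
  define P where "P = ec_calls n (Suc t) - Q"
  have disjoint: "P \<inter> Q = {}" and calls: "P \<union> Q = ec_calls n (Suc t)"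
    by (auto simp: P_def Q_def)
  have "ec_calls n t \<subseteq> P" "Oracle (Suc t) ` {..<n} \<subseteq> Q - P"
    using ec_calls_Suc by (force simp: P_def Q_def)+
  note merge = ec_gradient_averages_merge[OF this]
  interpret PQ: prob_space "PiM Q (call_space SG SC)"
    by (intro prob_space_PiM prob_space_call_space)
  define S where "S w = (1 / real n) *\<^sub>R (\<Sum>i<n. \<eta> *\<^sub>R et w t i + gt w t i)" for w
  define B where "B w = (1 / real n) *\<^sub>R (\<Sum>i<n. \<eta> *\<^sub>R et w t i + gradi i (xt w t))" for w
  have "S \<in> borel_measurable (PiM (ec_calls n (Suc t)) (call_space SG SC))"
    "B \<in> borel_measurable (PiM (ec_calls n (Suc t)) (call_space SG SC))"
    using ec_gradient_averages_measurable[of t "\<lambda>w. w", OF measurable_component_singleton]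
    unfolding S_def[abs_def] B_def[abs_def] by simp_all
  have "(\<integral>\<^sup>+\<omega>. ennreal ((norm (S (\<lambda>c. W c \<omega>)))\<^sup>2) \<partial>M)
      \<le> (\<integral>\<^sup>+\<omega>. ennreal ((norm (B (\<lambda>c. W c \<omega>)))\<^sup>2) + ennreal (\<sigma>\<^sup>2 / real n) \<partial>M)"
  proof (rule nn_integral_seeds_mono_merge[OF disjoint calls])
    show "(\<lambda>w. ennreal ((norm (S w))\<^sup>2)) \<in> borel_measurable (PiM (ec_calls n (Suc t)) (call_space SG SC))"
      "(\<lambda>w. ennreal ((norm (B w))\<^sup>2) + ennreal (\<sigma>\<^sup>2 / real n)) \<in> borel_measurable (PiM (ec_calls n (Suc t)) (call_space SG SC))"
      using \<open>S \<in> _\<close> \<open>B \<in> _\<close> by measurable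
    show "ennreal ((norm (S w))\<^sup>2) = ennreal ((norm (S w'))\<^sup>2)"
      "ennreal ((norm (B w))\<^sup>2) + ennreal (\<sigma>\<^sup>2 / real n) = ennreal ((norm (B w'))\<^sup>2) + ennreal (\<sigma>\<^sup>2 / real n)"
      if "\<And>c. c \<in> ec_calls n (Suc t) \<Longrightarrow> w c = w' c" for w w'
    proof -
      note cong = ec_cong[where w=w and w'=w' and t=t and g=g and C=C and \<gamma>=\<gamma> and \<eta>=\<eta> and ?x0.0=x0, OF that]
      have "S w = S w'" "B w = B w'"
        unfolding S_def B_def using cong by (auto intro!: sum.cong)
      then show "ennreal ((norm (S w))\<^sup>2) = ennreal ((norm (S w'))\<^sup>2)"
        "ennreal ((norm (B w))\<^sup>2) + ennreal (\<sigma>\<^sup>2 / real n) = ennreal ((norm (B w'))\<^sup>2) + ennreal (\<sigma>\<^sup>2 / real n)"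
        by simp_all
    qed
    show "(\<integral>\<^sup>+y. ennreal ((norm (S (merge P Q (x, y))))\<^sup>2) \<partial>PiM Q (call_space SG SC))
        \<le> (\<integral>\<^sup>+y. ennreal ((norm (B (merge P Q (x, y))))\<^sup>2) + ennreal (\<sigma>\<^sup>2 / real n) \<partial>PiM Q (call_space SG SC))" for x
      using nn_integral_oracle_average_le[where b="B x" and x="xt x t" and s="Suc t", folded Q_def]
      unfolding S_def B_def merge by (simp add: PQ.emeasure_space_1)
  qed
  also have "\<dots> = mean_sq B + ennreal (\<sigma>\<^sup>2 / real n)"
  proof -
    have "(\<lambda>\<omega>. B (\<lambda>c. W c \<omega>)) \<in> borel_measurable M"
      using ec_gradient_averages_measurable(2)[of t "\<lambda>\<omega> c. W c \<omega>", OF W_measurable] by (simp add: B_def)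
    then have "(\<integral>\<^sup>+\<omega>. ennreal ((norm (B (\<lambda>c. W c \<omega>)))\<^sup>2) + ennreal (\<sigma>\<^sup>2 / real n) \<partial>M)
        = mean_sq B + (\<integral>\<^sup>+\<omega>. ennreal (\<sigma>\<^sup>2 / real n) \<partial>M)"
      by (intro nn_integral_add; measurable)
    then show ?thesis
      by (simp add: emeasure_space_1)
  qed
  finally show ?thesis
    by (simp add: S_def B_def)
qed

lemma mean_sq_gradient_estimate_le:
  assumes gradf: "\<And>x. gradf x = (1 / real n) *\<^sub>R (\<Sum>i<n. gradi i x)"
  shows "mean_sq (\<lambda>w. (1 / real n) *\<^sub>R (\<Sum>i<n. \<eta> *\<^sub>R et w t i + gt w t i))
    \<le> ennreal (2 * \<eta>\<^sup>2 / real n) * (\<Sum>i<n. mean_sq (\<lambda>w. et w t i))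
      + ennreal 2 * mean_sq (\<lambda>w. gradf (xt w t)) + ennreal (\<sigma>\<^sup>2 / real n)"
proof -
  have "gradf \<in> borel_measurable borel"
    unfolding gradf[abs_def] using gradi_measurable
    by (intro borel_measurable_scaleR borel_measurable_const borel_measurable_sum) auto
  with ec_measurable_M(1) have "(\<lambda>\<omega>. gradf (xt (\<lambda>c. W c \<omega>) t)) \<in> borel_measurable M"
    by (rule measurable_compose)
  then have meas: "(\<lambda>\<omega>. (norm (gradf (xt (\<lambda>c. W c \<omega>) t)))\<^sup>2) \<in> borel_measurable M"
    "\<And>i. i < n \<Longrightarrow> (\<lambda>\<omega>. (norm (et (\<lambda>c. W c \<omega>) t i))\<^sup>2) \<in> borel_measurable M"
    using ec_measurable_M(2) by measurable
  have "mean_sq (\<lambda>w. (1 / real n) *\<^sub>R (\<Sum>i<n. \<eta> *\<^sub>R et w t i + gradi i (xt w t)))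
      \<le> (\<integral>\<^sup>+\<omega>. ennreal (2 * \<eta>\<^sup>2 / real n * (\<Sum>i<n. (norm (et (\<lambda>c. W c \<omega>) t i))\<^sup>2)
        + 2 * (norm (gradf (xt (\<lambda>c. W c \<omega>) t)))\<^sup>2) \<partial>M)"
    using norm_mean_add_squared_le[of "{..<n}" \<eta>] by (intro nn_integral_mono ennreal_leI) (simp add: gradf)
  also have "\<dots> = ennreal (2 * \<eta>\<^sup>2 / real n) * (\<Sum>i<n. mean_sq (\<lambda>w. et w t i))
      + ennreal 2 * mean_sq (\<lambda>w. gradf (xt w t))"
    using meas by (intro nn_integral_ennreal_lincomb) auto
  finally have "mean_sq (\<lambda>w. (1 / real n) *\<^sub>R (\<Sum>i<n. \<eta> *\<^sub>R et w t i + gradi i (xt w t)))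
      \<le> ennreal (2 * \<eta>\<^sup>2 / real n) * (\<Sum>i<n. mean_sq (\<lambda>w. et w t i)) + ennreal 2 * mean_sq (\<lambda>w. gradf (xt w t))" .
  then show ?thesis
    by (rule order_trans[OF mean_sq_stochastic_gradients_le add_right_mono])
qed

lemma mean_sq_step_le:
  assumes gradf: "\<And>x. gradf x = (1 / real n) *\<^sub>R (\<Sum>i<n. gradi i x)"
  shows "mean_sq (\<lambda>w. xt w (Suc t) - xt w t)
    \<le> ennreal (\<gamma>\<^sup>2) *
      (ennreal (2 * (1 - \<delta>)) * (ennreal (1 / real n) * (\<Sum>i<n. mean_sq (\<lambda>w. Vt w t i)))
       + ennreal (4 * \<eta>\<^sup>2) * (ennreal (1 / real n) * (\<Sum>i<n. mean_sq (\<lambda>w. et w t i)))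
       + 4 * mean_sq (\<lambda>w. gradf (xt w t)) + ennreal (2 * \<sigma>\<^sup>2 / real n))"
proof -
  let ?S = "\<lambda>w. (1 / real n) *\<^sub>R (\<Sum>i<n. \<eta> *\<^sub>R et w t i + gt w t i)"
  have meas: "\<And>i. i < n \<Longrightarrow> (\<lambda>\<omega>. (norm (Dt (\<lambda>c. W c \<omega>) t i - Vt (\<lambda>c. W c \<omega>) t i))\<^sup>2) \<in> borel_measurable M"
    "(\<lambda>\<omega>. (norm (?S (\<lambda>c. W c \<omega>)))\<^sup>2) \<in> borel_measurable M"
    using ec_measurable_M by (auto intro!: borel_measurable_power borel_measurable_norm borel_measurable_diff
        borel_measurable_scaleR borel_measurable_sum borel_measurable_add)
  have "mean_sq (\<lambda>w. xt w (Suc t) - xt w t)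
      \<le> (\<integral>\<^sup>+\<omega>. ennreal (2 * \<gamma>\<^sup>2 / real n * (\<Sum>i<n. (norm (Dt (\<lambda>c. W c \<omega>) t i - Vt (\<lambda>c. W c \<omega>) t i))\<^sup>2)
        + 2 * \<gamma>\<^sup>2 * (norm (?S (\<lambda>c. W c \<omega>)))\<^sup>2) \<partial>M)"
    by (intro nn_integral_mono ennreal_leI sq_norm_ec_step_le)
  also have "\<dots> = ennreal (2 * \<gamma>\<^sup>2 / real n) * (\<Sum>i<n. mean_sq (\<lambda>w. Dt w t i - Vt w t i))
      + ennreal (2 * \<gamma>\<^sup>2) * mean_sq ?S"
    using meas by (intro nn_integral_ennreal_lincomb) auto
  also have "\<dots> \<le> ennreal (2 * \<gamma>\<^sup>2 / real n) * (\<Sum>i<n. ennreal (1 - \<delta>) * mean_sq (\<lambda>w. Vt w t i))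
      + ennreal (2 * \<gamma>\<^sup>2) * (ennreal (2 * \<eta>\<^sup>2 / real n) * (\<Sum>i<n. mean_sq (\<lambda>w. et w t i))
        + ennreal 2 * mean_sq (\<lambda>w. gradf (xt w t)) + ennreal (\<sigma>\<^sup>2 / real n))"
    using mean_sq_compression_error_le mean_sq_gradient_estimate_le[OF gradf]
    by (intro add_mono mult_left_mono sum_mono) auto
  also have "\<dots> = ennreal (\<gamma>\<^sup>2) *
      (ennreal (2 * (1 - \<delta>)) * (ennreal (1 / real n) * (\<Sum>i<n. mean_sq (\<lambda>w. Vt w t i)))
       + ennreal (4 * \<eta>\<^sup>2) * (ennreal (1 / real n) * (\<Sum>i<n. mean_sq (\<lambda>w. et w t i)))
       + 4 * mean_sq (\<lambda>w. gradf (xt w t)) + ennreal (2 * \<sigma>\<^sup>2 / real n))"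
  proof -
    have "ennreal (2 * \<gamma>\<^sup>2 / real n) * ennreal (1 - \<delta>) = ennreal (\<gamma>\<^sup>2) * (ennreal (2 * (1 - \<delta>)) * ennreal (1 / real n))"
      "ennreal (2 * \<gamma>\<^sup>2) * ennreal (2 * \<eta>\<^sup>2 / real n) = ennreal (\<gamma>\<^sup>2) * (ennreal (4 * \<eta>\<^sup>2) * ennreal (1 / real n))"
      "ennreal (2 * \<gamma>\<^sup>2) * ennreal (\<sigma>\<^sup>2 / real n) = ennreal (\<gamma>\<^sup>2) * ennreal (2 * \<sigma>\<^sup>2 / real n)"
      using \<delta>_le_1 by (simp_all add: ennreal_mult[symmetric])
    moreover have "ennreal (2 * \<gamma>\<^sup>2) * 2 = ennreal (\<gamma>\<^sup>2) * 4"
      by (simp add: ennreal_mult' mult_ac)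
    ultimately show ?thesis
      by (simp add: distrib_left sum_distrib_left mult.assoc[symmetric])
  qed
  finally show ?thesis .
qed

end

theorem lemma10:
  fixes M :: "'a measure" and W :: "call \<Rightarrow> 'a \<Rightarrow> 's"
    and SG :: "nat \<Rightarrow> 's measure" and SC :: "'s measure"
    and g :: "nat \<Rightarrow> 'v::euclidean_space \<Rightarrow> 's \<Rightarrow> 'v" and C :: "'v \<Rightarrow> 's \<Rightarrow> 'v"
    and fi :: "nat \<Rightarrow> 'v \<Rightarrow> real" and gradi :: "nat \<Rightarrow> 'v \<Rightarrow> 'v"
    and f :: "'v \<Rightarrow> real" and gradf :: "'v \<Rightarrow> 'v"
    and n :: nat and L \<gamma> \<eta> \<delta> \<sigma> :: real and x0 :: 'v and t :: nat
  assumes "prob_space M"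
    and n: "n > 0"
    and \<gamma>: "\<gamma> > 0" and \<eta>: "\<eta> > 0"
    and \<delta>: "0 < \<delta>" "\<delta> \<le> 1"
    \<comment> \<open>f = (1/n) sum f_i, each f_i differentiable, f is L-smooth\<close>
    and f_def: "\<And>x. f x = (1 / real n) * (\<Sum>i<n. fi i x)"
    and grad_i: "\<And>i x. i < n \<Longrightarrow> GDERIV (fi i) x :> gradi i x"
    and grad_f: "\<And>x. GDERIV f x :> gradf x"
    and smooth: "\<And>x y. norm (gradf x - gradf y) \<le> L * norm (x - y)"
    \<comment> \<open>independent fresh randomness at each call\<close>
    and indep: "prob_space.indep_vars M
                  (\<lambda>c. case c of Oracle _ i \<Rightarrow> SG i | Comp _ _ \<Rightarrow> SC) W UNIV"
    and distr_oracle: "\<And>s i. distr M (SG i) (W (Oracle s i)) = SG i"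
    and distr_comp: "\<And>s i. distr M SC (W (Comp s i)) = SC"
    \<comment> \<open>stochastic gradient oracles\<close>
    and g_meas: "\<And>i. i < n \<Longrightarrow> (\<lambda>p. g i (fst p) (snd p)) \<in> borel_measurable (borel \<Otimes>\<^sub>M SG i)"
    and g_unbiased: "\<And>i x. i < n \<Longrightarrow> integrable (SG i) (g i x) \<and> (\<integral>s. g i x s \<partial>SG i) = gradi i x"
    and g_var: "\<And>i x. i < n \<Longrightarrow>
                  (\<integral>\<^sup>+s. ennreal ((norm (g i x s - gradi i x))\<^sup>2) \<partial>SG i) \<le> ennreal (\<sigma>\<^sup>2)"
    \<comment> \<open>compressor\<close>
    and C_meas: "(\<lambda>p. C (fst p) (snd p)) \<in> borel_measurable (borel \<Otimes>\<^sub>M SC)"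
    and C_contr: "\<And>v. (\<integral>\<^sup>+s. ennreal ((norm (C v s - v))\<^sup>2) \<partial>SC) \<le> ennreal ((1 - \<delta>) * (norm v)\<^sup>2)"
  shows
    "(\<integral>\<^sup>+\<omega>. ennreal ((norm (ec_x g C n \<gamma> \<eta> x0 (\<lambda>c. W c \<omega>) (Suc t)
                                 - ec_x g C n \<gamma> \<eta> x0 (\<lambda>c. W c \<omega>) t))\<^sup>2) \<partial>M)
     \<le> ennreal (\<gamma>\<^sup>2) *
        ( ennreal (2 * (1 - \<delta>)) *
            (ennreal (1 / real n) * (\<Sum>i<n. \<integral>\<^sup>+\<omega>. ennreal ((norm
                (\<eta> *\<^sub>R ec_e g C n \<gamma> \<eta> x0 (\<lambda>c. W c \<omega>) t i
                 + ec_g g C n \<gamma> \<eta> x0 (\<lambda>c. W c \<omega>) t i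
                 - ec_h g C n \<gamma> \<eta> x0 (\<lambda>c. W c \<omega>) t i))\<^sup>2) \<partial>M))
        + ennreal (4 * \<eta>\<^sup>2) *
            (ennreal (1 / real n) * (\<Sum>i<n. \<integral>\<^sup>+\<omega>. ennreal ((norm
                (ec_e g C n \<gamma> \<eta> x0 (\<lambda>c. W c \<omega>) t i))\<^sup>2) \<partial>M))
        + 4 * (\<integral>\<^sup>+\<omega>. ennreal ((norm (gradf (ec_x g C n \<gamma> \<eta> x0 (\<lambda>c. W c \<omega>) t)))\<^sup>2) \<partial>M)
        + ennreal (2 * \<sigma>\<^sup>2 / real n))"
proof -
  have "call_space SG SC = (\<lambda>c. case c of Oracle _ i \<Rightarrow> SG i | Comp _ _ \<Rightarrow> SC)"
    by (simp add: fun_eq_iff call_space_def)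
  with indep have indep': "prob_space.indep_vars M (call_space SG SC) W UNIV"
    by simp
  have law: "distr M (call_space SG SC c) (W c) = call_space SG SC c" for c
    by (cases c) (simp_all add: distr_oracle distr_comp)
  interpret econtrol_setting M W SG SC g C gradi n \<delta> \<sigma> \<gamma> \<eta> x0
    by (intro econtrol_setting.intro econtrol_setting_axioms.intro)
      (fact assms(1) n \<delta>(2) indep' law g_meas g_unbiased g_var C_meas C_contr)+
  have "gradf x = (1 / real n) *\<^sub>R (\<Sum>i<n. gradi i x)" for x
    using f_def grad_i grad_f by (rule GDERIV_mean_unique)
  then show ?thesis
    by (rule mean_sq_step_le[unfolded ec_V_def])
qed

end
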